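(* Let $A$ be any real $m\times n$ matrix with columns $A_1,\dots,A_n$, let $1\le k<n$, and let $\mathbf{S}$ be a random subset of $\{1,\dots,n\}$ distributed uniformly over all subsets of size $k$. Define $r_{\mathbf{S}}=\mathrm{rank}(A_{\mathbf{S}})$ and $t_{\mathbf{S}}=|\{i\notin\mathbf{S}: A_i\in\mathcal{R}(A_{\mathbf{S}})\}|$. Then $$\mathbb{E}[t_{\mathbf{S}}]\ge\Big(\frac nk-1\Big)\big(k-\mathbb{E}[r_{\mathbf{S}}]\big).$$
   Context: $A_{\mathbf{S}}$ denotes the submatrix of $A$ formed by the columns indexed by $\mathbf{S}$, and $\mathcal{R}(M)$ denotes the column (range) space of a matrix $M$. *)

theory Defs
  imports "HOL-Analysis.Analysis" "HOL-Probability.Probability"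
begin

definition colspace_sub :: "real^'n^'m \<Rightarrow> 'n set \<Rightarrow> (real^'m) set" where
  "colspace_sub A S = span ((\<lambda>i. column i A) ` S)"

definition r_S :: "real^'n^'m \<Rightarrow> 'n set \<Rightarrow> nat" where
  "r_S A S = dim (colspace_sub A S)"

definition t_S :: "real^'n^'m \<Rightarrow> 'n set \<Rightarrow> nat" where
  "t_S A S = card {i. i \<notin> S \<and> column i A \<in> colspace_sub A S}"

definition unif_ksubsets :: "nat \<Rightarrow> ('n::finite) set pmf" where
  "unif_ksubsets k = pmf_of_set {S. card S = k}"

end

theory Submission
  imports Defs
begin

(*
  Write c for the column map i \<mapsto> A_i, n = CARD('n), and for a k-set S call
  j \<in> S redundant in S if c j lies in the span of the other columns of S.

  (1) Removing the redundant indices of S leaves an independent family inside the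
      span of c ` S, so  |S| \<le> rank(A_S) + #redundant(S).
  (2) A double count: the triples (S, i, l) with i redundant in S and l \<notin> S are
      mapped injectively by S \<mapsto> S - {i} \<union> {l} to triples (S', i, l) with l \<in> S'
      and i \<notin> S' spanned by the columns of S'.  Summed over all k-sets this gives
      (n - k) \<Sum> #redundant(S) \<le> k \<Sum> t_S.
  Under the uniform distribution the expectations are the averages of these sums;
  dividing by the number of k-sets and combining (1) and (2) by elementary real
  arithmetic yields  E[t_S] \<ge> (n/k - 1)(k - E[r_S]).
*)

definition redundant :: "('i \<Rightarrow> 'a::real_vector) \<Rightarrow> 'i set \<Rightarrow> 'i set" where
  "redundant c S = {j \<in> S. c j \<in> span (c ` (S - {j}))}"

definition spanned_outside :: "('i \<Rightarrow> 'a::real_vector) \<Rightarrow> 'i set \<Rightarrow> 'i set" where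
  "spanned_outside c S = {i. i \<notin> S \<and> c i \<in> span (c ` S)}"

text \<open>Step (1): the non-redundant vectors of a finite family are distinct and
  independent, hence their number is bounded by the dimension of the span.\<close>
lemma card_le_dim_plus_redundant:
  fixes c :: "'i \<Rightarrow> 'a::euclidean_space"
  assumes "finite S"
  shows "card S \<le> dim (span (c ` S)) + card (redundant c S)"
proof -
  define N where "N = S - redundant c S"
  have essential: "c j \<notin> span (c ` (N - {j}))" if "j \<in> N" for j
  proof
    assume "c j \<in> span (c ` (N - {j}))"
    moreover have "span (c ` (N - {j})) \<subseteq> span (c ` (S - {j}))"
      by (rule span_mono) (auto simp: N_def)
    ultimately show False using that by (auto simp: N_def redundant_def)
  qed
  have inj: "inj_on c N"
  proof (rule inj_onI, rule ccontr)
    fix x y assume "x \<in> N" "y \<in> N" "c x = c y" "x \<noteq> y"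
    then have "c x \<in> span (c ` (N - {x}))" by (auto intro: span_base)
    with essential \<open>x \<in> N\<close> show False by blast
  qed
  have "independent (c ` N)"
    unfolding dependent_def
  proof clarsimp
    fix j assume "j \<in> N" and "c j \<in> span (c ` N - {c j})"
    moreover have "span (c ` N - {c j}) \<subseteq> span (c ` (N - {j}))"
      by (rule span_mono) auto
    ultimately show False using essential by blast
  qed
  moreover have "c ` N \<subseteq> span (c ` S)" by (auto simp: N_def intro: span_base)
  ultimately have "card (c ` N) \<le> dim (span (c ` S))"
    by (intro independent_card_le_dim)
  then have "card N \<le> dim (span (c ` S))" by (simp add: card_image[OF inj])
  moreover have "card S \<le> card N + card (redundant c S)"
    using assms card_Diff_subset[of "redundant c S" S] card_mono[of S "redundant c S"]
    by (auto simp: N_def redundant_def)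
  ultimately show ?thesis by linarith
qed

text \<open>Step (2), the exchange double count: swapping a redundant index i \<in> S for an
  outside index l keeps i in the span, so it becomes spanned from outside.\<close>
lemma exchange_double_count:
  fixes c :: "'n::finite \<Rightarrow> 'a::real_vector" and k :: nat
  defines "K \<equiv> {S::'n set. card S = k}"
  shows "(\<Sum>S\<in>K. card (redundant c S)) * (CARD('n) - k)
         \<le> (\<Sum>S\<in>K. card (spanned_outside c S)) * k"
proof -
  define Y where "Y = (SIGMA S:K. SIGMA i:redundant c S. - S)"
  define X where "X = (SIGMA S:K. SIGMA i:spanned_outside c S. S)"
  define exchange where
    "exchange = (\<lambda>(S::'n set, (i::'n, l::'n)). (insert l (S - {i}), (i, l)))"
  have card_compl: "card (- S) = CARD('n) - card S" for S :: "'n set"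
    by (metis Compl_eq_Diff_UNIV card_Diff_subset finite subset_UNIV)
  have "inj_on exchange Y"
  proof (rule inj_onI)
    fix a b assume "a \<in> Y" "b \<in> Y" "exchange a = exchange b"
    then obtain S S' i l where a: "a = (S, (i, l))" "i \<in> S" "l \<notin> S"
      and b: "b = (S', (i, l))" "i \<in> S'" "l \<notin> S'"
      and eq: "insert l (S - {i}) = insert l (S' - {i})"
      by (auto simp: Y_def exchange_def redundant_def)
    have "S = insert i (insert l (S - {i}) - {l})" using a by auto
    also have "\<dots> = S'" using b by (subst eq) auto
    finally show "a = b" using a b by simp
  qed
  moreover have "exchange ` Y \<subseteq> X"
  proof
    fix x assume "x \<in> exchange ` Y"
    then obtain S i l where S: "S \<in> K" "i \<in> S" "l \<notin> S"
      and i_spanned: "c i \<in> span (c ` (S - {i}))"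
      and x: "x = (insert l (S - {i}), (i, l))"
      by (auto simp: Y_def exchange_def redundant_def)
    have "card (insert l (S - {i})) = k"
      using S card_gt_0_iff[of S] by (auto simp: K_def card_insert_if)
    moreover have "span (c ` (S - {i})) \<subseteq> span (c ` insert l (S - {i}))"
      by (rule span_mono) auto
    ultimately show "x \<in> X"
      using S i_spanned x by (auto simp: X_def K_def spanned_outside_def)
  qed
  ultimately have "card Y \<le> card X" by (simp add: card_inj_on_le)
  moreover have "card Y = (\<Sum>S\<in>K. card (redundant c S)) * (CARD('n) - k)"
    by (simp add: Y_def card_SigmaI sum_distrib_right K_def card_compl)
  moreover have "card X = (\<Sum>S\<in>K. card (spanned_outside c S)) * k"
    by (simp add: X_def card_SigmaI sum_distrib_right K_def)
  ultimately show ?thesis by simp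
qed

lemma card_ksubsets_pos:
  assumes "k \<le> CARD('n::finite)"
  shows "0 < card {S::'n set. card S = k}"
proof -
  obtain B :: "'n set" where "card B = k"
    using obtain_subset_with_card_n[of k "UNIV :: 'n set"] assms by auto
  then show ?thesis by (auto simp: card_gt_0_iff)
qed

lemma expectation_unif_ksubsets:
  assumes "k \<le> CARD('n::finite)"
  shows "measure_pmf.expectation (unif_ksubsets k) f
         = (\<Sum>S\<in>{S::'n set. card S = k}. f S) / card {S::'n set. card S = k}"
  using card_ksubsets_pos[OF assms]
  by (simp add: unif_ksubsets_def integral_pmf_of_set card_gt_0_iff)

lemma expected_rank_plus_redundant:
  fixes A :: "real^'n^'m"
  assumes "k \<le> CARD('n)"
  shows "real k \<le> measure_pmf.expectation (unif_ksubsets k) (\<lambda>S. real (r_S A S))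
    + measure_pmf.expectation (unif_ksubsets k)
        (\<lambda>S. real (card (redundant (\<lambda>i. column i A) S)))"
proof -
  define K where "K = {S::'n set. card S = k}"
  have "real k * card K = (\<Sum>S\<in>K. real (card S))" by (simp add: K_def)
  also have "\<dots> \<le> (\<Sum>S\<in>K. real (r_S A S) + real (card (redundant (\<lambda>i. column i A) S)))"
    using card_le_dim_plus_redundant[of _ "\<lambda>i. column i A"]
    by (intro sum_mono) (simp add: r_S_def colspace_sub_def flip: of_nat_add)
  finally show ?thesis
    using card_ksubsets_pos[OF assms]
    by (simp add: expectation_unif_ksubsets[OF assms] sum.distrib K_def le_divide_eq
        flip: add_divide_distrib)
qed

lemma expected_exchange:
  fixes A :: "real^'n^'m"
  assumes "k \<le> CARD('n)"
  shows "measure_pmf.expectation (unif_ksubsets k)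
           (\<lambda>S. real (card (redundant (\<lambda>i. column i A) S))) * (real CARD('n) - real k)
         \<le> measure_pmf.expectation (unif_ksubsets k) (\<lambda>S. real (t_S A S)) * real k"
proof -
  define K where "K = {S::'n set. card S = k}"
  define c where "c = (\<lambda>i. column i A)"
  have "t_S A S = card (spanned_outside c S)" for S
    by (simp add: t_S_def spanned_outside_def colspace_sub_def c_def)
  then have "(\<Sum>S\<in>K. card (redundant c S)) * (CARD('n) - k) \<le> (\<Sum>S\<in>K. t_S A S) * k"
    using exchange_double_count[of c k] by (simp add: K_def)
  then have "real ((\<Sum>S\<in>K. card (redundant c S)) * (CARD('n) - k))
             \<le> real ((\<Sum>S\<in>K. t_S A S) * k)"
    by (simp only: of_nat_le_iff)
  then have "(\<Sum>S\<in>K. real (card (redundant c S))) * (real CARD('n) - real k)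
             \<le> (\<Sum>S\<in>K. real (t_S A S)) * real k"
    using assms by (simp add: of_nat_diff)
  then have "(\<Sum>S\<in>K. real (card (redundant c S))) * (real CARD('n) - real k) / card K
             \<le> (\<Sum>S\<in>K. real (t_S A S)) * real k / card K"
    by (rule divide_right_mono) simp
  then show ?thesis
    by (simp add: expectation_unif_ksubsets[OF assms] K_def c_def times_divide_eq_left)
qed

lemma combine_averages:
  fixes n k Et Er Ered :: real
  assumes "0 < k" "k \<le> n"
    and "k \<le> Er + Ered" and "Ered * (n - k) \<le> Et * k"
  shows "(n / k - 1) * (k - Er) \<le> Et"
proof -
  have "(n / k - 1) * (k - Er) = (n - k) * (k - Er) / k" using assms(1) by (simp add: field_simps)
  also have "\<dots> \<le> (n - k) * Ered / k"
    using assms by (intro divide_right_mono mult_left_mono) auto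
  also have "\<dots> \<le> Et" using assms by (simp add: field_simps mult.commute)
  finally show ?thesis .
qed

theorem lemma3:
  fixes A :: "real^'n^'m" and k :: nat
  assumes "1 \<le> k" and "k < CARD('n)"
  shows "measure_pmf.expectation (unif_ksubsets k) (\<lambda>S. real (t_S A S))
         \<ge> (real CARD('n) / real k - 1) *
           (real k - measure_pmf.expectation (unif_ksubsets k) (\<lambda>S. real (r_S A S)))"
proof -
  have k_le: "k \<le> CARD('n)" using assms(2) by simp
  show ?thesis
    using combine_averages[OF _ _ expected_rank_plus_redundant[OF k_le, of A]
        expected_exchange[OF k_le, of A]] assms k_le
    by simp
qed

end
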